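(* Let $\Omega\subset\mathbb{R}^N$ be open and bounded, $\alpha\in(0,N)$, $q\in(1,\infty]$, $f\in L^{N/\alpha,q}(\Omega)$ (extended by zero outside $\Omega$), and let $\frac12(N/\alpha+1)\le p<N/\alpha$ and $\delta:=N/p-\alpha>0$. Then for every $\epsilon \in (0,\alpha)$ and every $x\in\mathbb{R}^N$, \[ |I_{\alpha}f(x)|\leq C_4\, \mathcal{M}_{\alpha-\epsilon}f(x)^{\frac{\delta}{\delta+\epsilon }}\,\|f\|_{L^{p,1}(\mathbb{R}^N)}^{\frac{\epsilon }{\epsilon+\delta}} \] for some constant $C_4=C_4(N,\alpha,\epsilon)>0$ independent of $\delta$ (and hence of $p$).
   Context: The Riesz potential is $I_\alpha f(x) = \frac{1}{\gamma(\alpha)}\int_{\mathbb{R}^N} \frac{f(y)}{|x-y|^{N-\alpha}}\,dy$, $\gamma(\alpha)=\pi^{N/2}2^{\alpha}\Gamma(\alpha/2)\Gamma((N-\alpha)/2)^{-1}$. The fractional maximal function is $\mathcal{M}_{\gamma}f(x)=\sup_{r>0}r^{\gamma}\fint_{B(x,r)}|f(y)|\,dy$. For a measurable $f$ on $\mathbb{R}^N$ let $f^*$ be its non-increasing rearrangement and $f^{**}(x)=\frac1x\int_0^x f^*(t)\,dt$; for $1<p<\infty$, $1\le q<\infty$, $\|f\|_{L^{p,q}(\mathbb{R}^N)} = (\int_0^\infty [t^{1/p}f^{**}(t)]^q\,\frac{dt}{t})^{1/q}$, $\|f\|_{L^{p,\infty}(\mathbb{R}^N)}=\sup_{t>0}t^{1/p}f^{**}(t)$,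 and $\|f\|_{L^{p,q}(\Omega)}:=\|f\chi_\Omega\|_{L^{p,q}(\mathbb{R}^N)}$. *)

theory Defs
  imports "HOL-Analysis.Analysis"
begin

text \<open>Real powers of extended nonnegative reals (only used with positive exponents):
  infinity to a positive power is infinity.\<close>
definition epowr :: "ennreal \<Rightarrow> real \<Rightarrow> ennreal" where
  "epowr x r = (if x = \<infinity> then \<infinity> else ennreal (enn2real x powr r))"

definition riesz_const :: "real \<Rightarrow> real \<Rightarrow> real" where
  "riesz_const N \<alpha> = pi powr (N / 2) * 2 powr \<alpha> * Gamma (\<alpha> / 2) / Gamma ((N - \<alpha>) / 2)"

definition riesz_potential :: "real \<Rightarrow> ('a::euclidean_space \<Rightarrow> real) \<Rightarrow> 'a \<Rightarrow> real" where
  "riesz_potential \<alpha> f x =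
     (1 / riesz_const (real DIM('a)) \<alpha>) *
     (\<integral> y. f y / norm (x - y) powr (real DIM('a) - \<alpha>) \<partial>lborel)"

definition frac_maximal :: "real \<Rightarrow> ('a::euclidean_space \<Rightarrow> real) \<Rightarrow> 'a \<Rightarrow> ennreal" where
  "frac_maximal \<gamma> f x =
     (SUP r\<in>{0<..}. ennreal (r powr \<gamma>) *
        ((\<integral>\<^sup>+ y\<in>ball x r. ennreal \<bar>f y\<bar> \<partial>lborel) / emeasure lborel (ball x r)))"

definition rearr :: "('a::euclidean_space \<Rightarrow> real) \<Rightarrow> real \<Rightarrow> ennreal" where
  "rearr f t = Inf {s::ennreal. emeasure lborel {x. ennreal \<bar>f x\<bar> > s} \<le> ennreal t}"

definition rearr2 :: "('a::euclidean_space \<Rightarrow> real) \<Rightarrow> real \<Rightarrow> ennreal" where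
  "rearr2 f t = ennreal (1 / t) * (\<integral>\<^sup>+ s\<in>{0<..<t}. rearr f s \<partial>lborel)"

definition lorentz_norm :: "real \<Rightarrow> ennreal \<Rightarrow> ('a::euclidean_space \<Rightarrow> real) \<Rightarrow> ennreal" where
  "lorentz_norm p q f =
     (if q = \<infinity> then (SUP t\<in>{0<..}. ennreal (t powr (1 / p)) * rearr2 f t)
      else epowr (\<integral>\<^sup>+ t\<in>{0<..}. epowr (ennreal (t powr (1 / p)) * rearr2 f t) (enn2real q)
                     * ennreal (1 / t) \<partial>lborel) (1 / enn2real q))"

end

theory Submission
  imports Defs
begin

(* Writing |x - y|^(alpha - N) as the integral of c t^(alpha/N - 2) over the volumes
   t > |B(x, |x - y|)| and exchanging the integrals turns the unnormalised Riesz potential of |f|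
   into the integral over t > 0 of c t^(alpha/N - 2) F(t), where F(t) is the mass of |f| in the
   ball around x of volume t.  For small t the fractional maximal function bounds F(t) by
   t^(1 - (alpha - epsilon)/N) M_(alpha-epsilon) f(x); for large t the Hardy-Littlewood
   inequality bounds it by t f**(t), whose weighted integral is the L^(p,1) norm.  Splitting at T
   gives K1 T^(epsilon/N) M + K2 T^(-delta/N) ||f||_(p,1) with K1, K2 depending only on N, alpha
   and epsilon, and the choice of T balancing the two terms gives the interpolation inequality. *)

section \<open>Level sets and the layer cake formula\<close>

lemma borel_measurable_real_monotone:
  fixes g :: "real \<Rightarrow> 'b::{linorder_topology, second_countable_topology}"
  assumes "mono g \<or> antimono g"
  shows "g \<in> borel_measurable borel"
proof (rule borel_measurableI_greater)
  fix y
  have "is_interval {x. y < g x}"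
    using assms unfolding is_interval_1 mono_def antimono_def by (auto intro: less_le_trans)
  then show "{x \<in> space borel. y < g x} \<in> sets borel"
    by (simp add: real_interval_borel_measurable)
qed

lemma emeasure_lborel_Ioc_ennreal:
  "emeasure lborel {\<sigma>::real. 0 < \<sigma> \<and> ennreal \<sigma> \<le> v} = v"
proof (cases v)
  case (real r)
  then have "{\<sigma>::real. 0 < \<sigma> \<and> ennreal \<sigma> \<le> v} = {0<..r}"
    by auto
  then show ?thesis using real by simp
next
  case top
  have "emeasure lborel {0::real<..} = \<infinity>"
  proof (rule ccontr)
    assume "emeasure lborel {0::real<..} \<noteq> \<infinity>"
    then obtain n where "emeasure lborel {0::real<..} < of_nat n"
      using ennreal_Ex_less_of_nat by (auto simp: less_top)
    moreover have "emeasure lborel {0<..real n} \<le> emeasure lborel {0::real<..}"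
      by (intro emeasure_mono) auto
    ultimately show False by (simp add: ennreal_of_nat_eq_real_of_nat)
  qed
  moreover have "{\<sigma>::real. 0 < \<sigma> \<and> ennreal \<sigma> \<le> v} = {0<..}" using top by auto
  ultimately show ?thesis using top by simp
qed

lemma nn_integral_layer_cake:
  fixes g :: "'a \<Rightarrow> ennreal"
  assumes M: "sigma_finite_measure M" and g[measurable]: "g \<in> borel_measurable M"
  shows "(\<integral>\<^sup>+y. g y \<partial>M) = (\<integral>\<^sup>+\<sigma>\<in>{0<..}. emeasure M {y \<in> space M. ennreal \<sigma> \<le> g y} \<partial>lborel)"
proof -
  interpret pair_sigma_finite M lborel
    using M by (simp add: pair_sigma_finite_def lborel.sigma_finite_measure_axioms)
  have "(\<integral>\<^sup>+y. g y \<partial>M) = (\<integral>\<^sup>+y. \<integral>\<^sup>+\<sigma>. indicator {\<sigma>. 0 < \<sigma> \<and> ennreal \<sigma> \<le> g y} \<sigma> \<partial>lborel \<partial>M)"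
    by (simp add: emeasure_lborel_Ioc_ennreal)
  also have "\<dots> = (\<integral>\<^sup>+\<sigma>. \<integral>\<^sup>+y. indicator {\<sigma>. 0 < \<sigma> \<and> ennreal \<sigma> \<le> g y} \<sigma> \<partial>M \<partial>lborel)"
    by (rule Fubini'[symmetric]) measurable
  also have "\<dots> = (\<integral>\<^sup>+\<sigma>\<in>{0<..}. emeasure M {y \<in> space M. ennreal \<sigma> \<le> g y} \<partial>lborel)"
    by (intro nn_integral_cong) (auto simp: indicator_def nn_integral_indicator[symmetric] intro!: nn_integral_cong)
  finally show ?thesis .
qed

section \<open>The Hardy--Littlewood inequality for the decreasing rearrangement\<close>

lemma emeasure_lborel_less_min:
  fixes m :: ennreal and t :: real
  assumes "0 \<le> t"
  shows "emeasure lborel {s::real. 0 < s \<and> s < t \<and> ennreal s < m} = min (ennreal t) m"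
proof (cases m)
  case (real r)
  then have "{s::real. 0 < s \<and> s < t \<and> ennreal s < m} = {0<..<min t r}"
    by (auto simp: ennreal_less_iff)
  then show ?thesis using real assms by (simp add: min_def ennreal_leI)
next
  case top
  then have "{s::real. 0 < s \<and> s < t \<and> ennreal s < m} = {0<..<t}" by auto
  then show ?thesis using top assms by simp
qed

lemma antimono_rearr: "antimono (rearr f)"
  unfolding antimono_def rearr_def
  by (auto intro!: Inf_superset_mono intro: order_trans ennreal_leI)

lemma ennreal_le_rearr:
  fixes f :: "'a::euclidean_space \<Rightarrow> real"
  assumes f[measurable]: "f \<in> borel_measurable lborel"
    and s: "ennreal s < emeasure lborel {x. \<sigma> \<le> \<bar>f x\<bar>}"
  shows "ennreal \<sigma> \<le> rearr f s"
  unfolding rearr_def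
proof (rule Inf_greatest)
  fix \<tau> assume "\<tau> \<in> {\<tau>. emeasure lborel {x. \<tau> < ennreal \<bar>f x\<bar>} \<le> ennreal s}"
  then have \<tau>: "emeasure lborel {x. \<tau> < ennreal \<bar>f x\<bar>} \<le> ennreal s" by simp
  show "ennreal \<sigma> \<le> \<tau>"
  proof (rule ccontr)
    assume "\<not> ennreal \<sigma> \<le> \<tau>"
    then have "{x. \<sigma> \<le> \<bar>f x\<bar>} \<subseteq> {x. \<tau> < ennreal \<bar>f x\<bar>}"
      by (auto intro: less_le_trans ennreal_leI simp: not_le)
    then have "emeasure lborel {x. \<sigma> \<le> \<bar>f x\<bar>} \<le> emeasure lborel {x. \<tau> < ennreal \<bar>f x\<bar>}"
      by (intro emeasure_mono) measurable
    with \<tau> s show False by simp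
  qed
qed

lemma nn_integral_le_rearr:
  fixes f :: "'a::euclidean_space \<Rightarrow> real"
  assumes f[measurable]: "f \<in> borel_measurable lborel" and E[measurable]: "E \<in> sets lborel"
    and E_le: "emeasure lborel E \<le> ennreal t" and t: "0 \<le> t"
  shows "(\<integral>\<^sup>+y\<in>E. ennreal \<bar>f y\<bar> \<partial>lborel) \<le> (\<integral>\<^sup>+s\<in>{0<..<t}. rearr f s \<partial>lborel)"
proof -
  have rearr_meas[measurable]: "rearr f \<in> borel_measurable borel"
    by (intro borel_measurable_real_monotone disjI2 antimono_rearr)
  have "(\<integral>\<^sup>+y\<in>E. ennreal \<bar>f y\<bar> \<partial>lborel)
      = (\<integral>\<^sup>+\<sigma>\<in>{0<..}. emeasure lborel {y. ennreal \<sigma> \<le> ennreal \<bar>f y\<bar> * indicator E y} \<partial>lborel)"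
    by (subst nn_integral_layer_cake) (simp_all add: lborel.sigma_finite_measure_axioms)
  also have "\<dots> \<le> (\<integral>\<^sup>+\<sigma>\<in>{0<..}. emeasure lborel {s. ennreal \<sigma> \<le> rearr f s * indicator {0<..<t} s} \<partial>lborel)"
  proof (intro nn_integral_mono)
    fix \<sigma> :: real
    show "emeasure lborel {y. ennreal \<sigma> \<le> ennreal \<bar>f y\<bar> * indicator E y} * indicator {0<..} \<sigma>
        \<le> emeasure lborel {s. ennreal \<sigma> \<le> rearr f s * indicator {0<..<t} s} * indicator {0<..} \<sigma>"
    proof (cases "0 < \<sigma>")
      case True
      let ?\<mu> = "emeasure lborel {x. \<sigma> \<le> \<bar>f x\<bar>}"
      have "{y. ennreal \<sigma> \<le> ennreal \<bar>f y\<bar> * indicator E y} = E \<inter> {x. \<sigma> \<le> \<bar>f x\<bar>}"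
        using True by (auto simp: indicator_def)
      also have "emeasure lborel \<dots> \<le> min (ennreal t) ?\<mu>"
      proof -
        have "emeasure lborel (E \<inter> {x. \<sigma> \<le> \<bar>f x\<bar>}) \<le> emeasure lborel E"
          using E by (intro emeasure_mono) auto
        moreover have "emeasure lborel (E \<inter> {x. \<sigma> \<le> \<bar>f x\<bar>}) \<le> ?\<mu>"
          by (intro emeasure_mono) auto
        ultimately show ?thesis using E_le by simp
      qed
      also have "\<dots> = emeasure lborel {s. 0 < s \<and> s < t \<and> ennreal s < ?\<mu>}"
        using t by (rule emeasure_lborel_less_min[symmetric])
      also have "\<dots> \<le> emeasure lborel {s. ennreal \<sigma> \<le> rearr f s * indicator {0<..<t} s}"
        by (intro emeasure_mono) (auto simp: ennreal_le_rearr)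
      finally show ?thesis using True by simp
    qed simp
  qed
  also have "\<dots> = (\<integral>\<^sup>+s\<in>{0<..<t}. rearr f s \<partial>lborel)"
    by (subst nn_integral_layer_cake) (simp_all add: lborel.sigma_finite_measure_axioms)
  finally show ?thesis .
qed

lemma borel_measurable_rearr2 [measurable]: "rearr2 f \<in> borel_measurable borel"
proof -
  have "mono (\<lambda>t. \<integral>\<^sup>+s\<in>{0<..<t}. rearr f s \<partial>lborel)"
    by (auto simp: mono_def indicator_def intro!: nn_integral_mono)
  then have [measurable]: "(\<lambda>t. \<integral>\<^sup>+s\<in>{0<..<t}. rearr f s \<partial>lborel) \<in> borel_measurable borel"
    by (intro borel_measurable_real_monotone disjI1)
  show ?thesis unfolding rearr2_def[abs_def] by measurable
qed

lemma lorentz_norm_1: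
  "lorentz_norm p 1 f = (\<integral>\<^sup>+t\<in>{0<..}. ennreal (t powr (1 / p)) * rearr2 f t * ennreal (1 / t) \<partial>lborel)"
proof -
  have "epowr z 1 = z" for z by (cases z) (simp_all add: epowr_def)
  then show ?thesis by (simp add: lorentz_norm_def)
qed

section \<open>Power integrals and a two-sided interpolation bound\<close>

lemma nn_integral_powr_greaterThan:
  assumes "0 < m" "e < -1"
  shows "(\<integral>\<^sup>+t\<in>{m<..}. ennreal (t powr e) \<partial>lborel) = ennreal (- (m powr (e + 1)) / (e + 1))"
proof -
  have "((\<lambda>t. t powr e) has_integral - (m powr (e + 1)) / (e + 1)) {m..}"
    by (rule has_integral_powr_to_inf) (use assms in auto)
  then have "((\<lambda>t. if t \<in> {m..} then t powr e else 0) has_integral - (m powr (e + 1)) / (e + 1)) UNIV"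
    by (subst has_integral_restrict_UNIV)
  then have "(\<integral>\<^sup>+t. ennreal (if t \<in> {m..} then t powr e else 0) \<partial>lborel) = ennreal (- (m powr (e + 1)) / (e + 1))"
    by (intro nn_integral_has_integral_lborel) auto
  moreover have "(\<integral>\<^sup>+t\<in>{m<..}. ennreal (t powr e) \<partial>lborel) = (\<integral>\<^sup>+t. ennreal (if t \<in> {m..} then t powr e else 0) \<partial>lborel)"
    using AE_lborel_singleton[of m]
    by (intro nn_integral_cong_AE) (auto elim!: eventually_mono simp: indicator_def)
  ultimately show ?thesis by simp
qed

lemma nn_integral_powr_Ioc:
  assumes "-1 < e" "0 \<le> T"
  shows "(\<integral>\<^sup>+t\<in>{0<..T}. ennreal (t powr e) \<partial>lborel) = ennreal (T powr (e + 1) / (e + 1))"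
proof -
  have "((\<lambda>t. t powr e) has_integral T powr (e + 1) / (e + 1)) {0..T}"
    by (rule has_integral_powr_from_0) (use assms in auto)
  then have "((\<lambda>t. if t \<in> {0..T} then t powr e else 0) has_integral T powr (e + 1) / (e + 1)) UNIV"
    by (subst has_integral_restrict_UNIV)
  then have "(\<integral>\<^sup>+t. ennreal (if t \<in> {0..T} then t powr e else 0) \<partial>lborel) = ennreal (T powr (e + 1) / (e + 1))"
    by (intro nn_integral_has_integral_lborel) auto
  moreover have "(\<integral>\<^sup>+t\<in>{0<..T}. ennreal (t powr e) \<partial>lborel) = (\<integral>\<^sup>+t. ennreal (if t \<in> {0..T} then t powr e else 0) \<partial>lborel)"
    using AE_lborel_singleton[of 0]
    by (intro nn_integral_cong_AE) (auto elim!: eventually_mono simp: indicator_def)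
  ultimately show ?thesis by simp
qed

lemma ennreal_mult_mult:
  "0 \<le> a \<Longrightarrow> 0 \<le> b \<Longrightarrow> ennreal a * (ennreal b * z) = ennreal (a * b) * z"
  by (simp add: ennreal_mult mult.assoc)

lemma powr_balance:
  fixes m l e1 e2 :: real
  assumes m: "0 < m" and l: "0 < l" and e: "0 < e1" "0 < e2"
  defines "T \<equiv> (l / m) powr (1 / (e1 + e2))"
  shows "T powr e1 * m = m powr (e2 / (e1 + e2)) * l powr (e1 / (e1 + e2))"
    and "T powr (- e2) * l = m powr (e2 / (e1 + e2)) * l powr (e1 / (e1 + e2))"
proof -
  have s: "e2 / (e1 + e2) = 1 - e1 / (e1 + e2)" "e1 / (e1 + e2) = 1 - e2 / (e1 + e2)"
    using e by (simp_all add: field_simps)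
  show "T powr e1 * m = m powr (e2 / (e1 + e2)) * l powr (e1 / (e1 + e2))"
    unfolding T_def s(1) using m l by (simp add: powr_powr powr_divide powr_diff field_simps)
  show "T powr (- e2) * l = m powr (e2 / (e1 + e2)) * l powr (e1 / (e1 + e2))"
    unfolding T_def s(2) using m l by (simp add: powr_powr powr_divide powr_diff powr_minus field_simps)
qed

lemma epowr_pos: "x \<noteq> 0 \<Longrightarrow> 0 < epowr x r"
  by (cases x) (auto simp: epowr_def)

lemma set_nn_integral_UN_eq_0:
  assumes [measurable]: "f \<in> borel_measurable M" "\<And>n::nat. A n \<in> sets M"
    and zero: "\<And>n. (\<integral>\<^sup>+x\<in>A n. f x \<partial>M) = 0"
  shows "(\<integral>\<^sup>+x\<in>(\<Union>n. A n). f x \<partial>M) = 0"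
proof -
  have "AE x in M. x \<in> A n \<longrightarrow> f x = 0" for n
    using zero[of n] by (subst (asm) nn_integral_0_iff_AE) (auto elim!: eventually_mono split: split_indicator)
  then have "AE x in M. \<forall>n. x \<in> A n \<longrightarrow> f x = 0"
    by (simp only: AE_all_countable) blast
  then show ?thesis
    by (subst nn_integral_0_iff_AE) (auto elim!: eventually_mono split: split_indicator)
qed

lemma set_nn_integral_greaterThan_split:
  fixes \<Phi> :: "real \<Rightarrow> ennreal"
  assumes [measurable]: "\<Phi> \<in> borel_measurable borel" and T: "0 < T"
  shows "(\<integral>\<^sup>+t\<in>{0<..}. \<Phi> t \<partial>lborel) = (\<integral>\<^sup>+t\<in>{0<..T}. \<Phi> t \<partial>lborel) + (\<integral>\<^sup>+t\<in>{T<..}. \<Phi> t \<partial>lborel)"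
proof -
  have "(\<integral>\<^sup>+t\<in>{0<..}. \<Phi> t \<partial>lborel) = (\<integral>\<^sup>+t. \<Phi> t * indicator {0<..T} t + \<Phi> t * indicator {T<..} t \<partial>lborel)"
    using T by (intro nn_integral_cong) (auto split: split_indicator)
  also have "\<dots> = (\<integral>\<^sup>+t\<in>{0<..T}. \<Phi> t \<partial>lborel) + (\<integral>\<^sup>+t\<in>{T<..}. \<Phi> t \<partial>lborel)"
    by (rule nn_integral_add) auto
  finally show ?thesis .
qed

lemma set_nn_integral_greaterThan_eq_0_Ioc:
  fixes \<Phi> :: "real \<Rightarrow> ennreal"
  assumes [measurable]: "\<Phi> \<in> borel_measurable borel"
    and zero: "\<And>T. 0 < T \<Longrightarrow> (\<integral>\<^sup>+t\<in>{0<..T}. \<Phi> t \<partial>lborel) = 0"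
  shows "(\<integral>\<^sup>+t\<in>{0<..}. \<Phi> t \<partial>lborel) = 0"
proof -
  have "{0<..} = (\<Union>n. {0<..real (Suc n)})"
  proof safe
    fix t :: real assume "0 < t"
    obtain n where "t \<le> real n" using real_arch_simple by blast
    then show "t \<in> (\<Union>n. {0<..real (Suc n)})" using \<open>0 < t\<close> by (intro UN_I[of n]) auto
  qed auto
  then show ?thesis
    using zero by (simp only:) (intro set_nn_integral_UN_eq_0; simp)
qed

lemma set_nn_integral_greaterThan_eq_0_Ioi:
  fixes \<Phi> :: "real \<Rightarrow> ennreal"
  assumes [measurable]: "\<Phi> \<in> borel_measurable borel"
    and zero: "\<And>T. 0 < T \<Longrightarrow> (\<integral>\<^sup>+t\<in>{T<..}. \<Phi> t \<partial>lborel) = 0"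
  shows "(\<integral>\<^sup>+t\<in>{0<..}. \<Phi> t \<partial>lborel) = 0"
proof -
  have "{0<..} = (\<Union>n. {1 / real (Suc n)<..})"
  proof safe
    fix t :: real assume "0 < t"
    then obtain n where "1 / real (Suc n) < t" by (rule nat_approx_posE)
    then show "t \<in> (\<Union>n. {1 / real (Suc n)<..})" by (intro UN_I[of n]) auto
  qed (auto intro: order.strict_trans[rotated] simp del: of_nat_Suc)
  then show ?thesis
    using zero by (simp only:) (intro set_nn_integral_UN_eq_0; simp)
qed

lemma nn_integral_interpolation_bound:
  fixes \<Phi> :: "real \<Rightarrow> ennreal" and A B :: ennreal and K1 K2 e1 e2 :: real
  assumes \<Phi>[measurable]: "\<Phi> \<in> borel_measurable borel"
    and K: "0 < K1" "0 < K2" and e: "0 < e1" "0 < e2"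
    and lower: "\<And>T. 0 < T \<Longrightarrow> (\<integral>\<^sup>+t\<in>{0<..T}. \<Phi> t \<partial>lborel) \<le> ennreal (K1 * T powr e1) * A"
    and upper: "\<And>T. 0 < T \<Longrightarrow> (\<integral>\<^sup>+t\<in>{T<..}. \<Phi> t \<partial>lborel) \<le> ennreal (K2 * T powr (- e2)) * B"
  shows "(\<integral>\<^sup>+t\<in>{0<..}. \<Phi> t \<partial>lborel)
    \<le> ennreal (K1 + K2) * epowr A (e2 / (e1 + e2)) * epowr B (e1 / (e1 + e2))"
proof -
  consider "A = 0" | "B = 0" | "A \<noteq> 0" "B \<noteq> 0" "A = \<infinity> \<or> B = \<infinity>"
    | m l where "A = ennreal m" "B = ennreal l" "0 < m" "0 < l"
    by (cases A; cases B) (auto simp: order.order_iff_strict)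
  then show ?thesis
  proof cases
    case 1
    then show ?thesis
      using lower by (simp add: set_nn_integral_greaterThan_eq_0_Ioc)
  next
    case 2
    then show ?thesis
      using upper by (simp add: set_nn_integral_greaterThan_eq_0_Ioi)
  next
    case 3
    then have "ennreal (K1 + K2) * epowr A (e2 / (e1 + e2)) * epowr B (e1 / (e1 + e2)) = \<infinity>"
      using K epowr_pos[of A] epowr_pos[of B] by (auto simp: epowr_def ennreal_mult_eq_top_iff)
    then show ?thesis by simp
  next
    case 4
    define T where "T = (l / m) powr (1 / (e1 + e2))"
    have T: "0 < T" using 4 by (simp add: T_def)
    have "(\<integral>\<^sup>+t\<in>{0<..}. \<Phi> t \<partial>lborel) = (\<integral>\<^sup>+t\<in>{0<..T}. \<Phi> t \<partial>lborel) + (\<integral>\<^sup>+t\<in>{T<..}. \<Phi> t \<partial>lborel)"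
      using T by (rule set_nn_integral_greaterThan_split[OF \<Phi>])
    also have "\<dots> \<le> ennreal (K1 * T powr e1) * A + ennreal (K2 * T powr (- e2)) * B"
      using lower[OF T] upper[OF T] by (rule add_mono)
    also have "\<dots> = ennreal (K1 * (T powr e1 * m) + K2 * (T powr (- e2) * l))"
      using 4 K by (simp add: ennreal_mult[symmetric] ennreal_plus[symmetric] mult.assoc del: ennreal_plus)
    also have "\<dots> = ennreal (K1 + K2) * epowr A (e2 / (e1 + e2)) * epowr B (e1 / (e1 + e2))"
      using 4 K e
      by (simp add: powr_balance[OF 4(3,4) e] T_def epowr_def ennreal_mult[symmetric] distrib_right mult.assoc)
    finally show ?thesis .
  qed
qed

section \<open>Balls of prescribed volume\<close>

definition vol_radius :: "nat \<Rightarrow> real \<Rightarrow> real" where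
  "vol_radius n t = (t / unit_ball_vol n) powr (1 / n)"

lemma unit_ball_vol_of_nat_neq_0 [simp]: "unit_ball_vol (real n) \<noteq> 0"
  using unit_ball_vol_pos[of "real n"] by linarith

lemma vol_radius_pos: "0 < t \<Longrightarrow> 0 < vol_radius n t"
  by (simp add: vol_radius_def)

lemma unit_ball_vol_mult_vol_radius:
  assumes "0 < t" "0 < n"
  shows "unit_ball_vol n * vol_radius n t ^ n = t"
proof -
  have "vol_radius n t ^ n = vol_radius n t powr real n"
    using assms by (simp add: vol_radius_pos powr_realpow)
  also have "\<dots> = t / unit_ball_vol n"
    using assms by (simp add: vol_radius_def powr_powr)
  finally show ?thesis by simp
qed

lemma emeasure_ball_vol_radius:
  assumes "0 < t"
  shows "emeasure lborel (ball (x::'a::euclidean_space) (vol_radius DIM('a) t)) = ennreal t"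
  using assms vol_radius_pos[OF assms, of "DIM('a)"]
  by (simp add: emeasure_ball unit_ball_vol_mult_vol_radius)

lemma less_vol_radius_iff:
  assumes "0 < t" "0 < n" "0 \<le> d"
  shows "d < vol_radius n t \<longleftrightarrow> unit_ball_vol n * d powr n < t"
proof -
  have "d < vol_radius n t \<longleftrightarrow> d powr n < vol_radius n t powr n"
    using assms vol_radius_pos[of t n] by (meson not_less powr_less_mono2 powr_mono2 of_nat_0_less_iff less_imp_le)
  also have "vol_radius n t powr n = t / unit_ball_vol n"
    using assms by (simp add: vol_radius_def powr_powr)
  finally show ?thesis by (simp add: field_simps)
qed

lemma vol_radius_powr:
  assumes "0 < t" "0 < n"
  shows "vol_radius n t powr (- \<gamma>) = unit_ball_vol n powr (\<gamma> / n) * t powr (- \<gamma> / n)"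
  using assms by (simp add: vol_radius_def powr_powr powr_divide powr_minus_divide divide_simps)

definition ball_mass :: "('a::euclidean_space \<Rightarrow> real) \<Rightarrow> 'a \<Rightarrow> real \<Rightarrow> ennreal" where
  "ball_mass f x t = (\<integral>\<^sup>+y\<in>ball x (vol_radius DIM('a) t). ennreal \<bar>f y\<bar> \<partial>lborel)"

lemma borel_measurable_ball_mass [measurable]: "ball_mass f x \<in> borel_measurable borel"
proof -
  have "mono (\<lambda>r. \<integral>\<^sup>+y\<in>ball x r. ennreal \<bar>f y\<bar> \<partial>lborel)"
    by (auto simp: mono_def indicator_def intro!: nn_integral_mono)
  then have [measurable]: "(\<lambda>r. \<integral>\<^sup>+y\<in>ball x r. ennreal \<bar>f y\<bar> \<partial>lborel) \<in> borel_measurable borel"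
    by (intro borel_measurable_real_monotone disjI1)
  show ?thesis
    unfolding ball_mass_def vol_radius_def by measurable
qed

lemma nn_integral_ball_le_frac_maximal:
  fixes f :: "'a::euclidean_space \<Rightarrow> real"
  assumes r: "0 < r"
  shows "(\<integral>\<^sup>+y\<in>ball x r. ennreal \<bar>f y\<bar> \<partial>lborel)
    \<le> ennreal (unit_ball_vol DIM('a) * r ^ DIM('a) * r powr (- \<gamma>)) * frac_maximal \<gamma> f x"
proof -
  define I where "I = (\<integral>\<^sup>+y\<in>ball x r. ennreal \<bar>f y\<bar> \<partial>lborel)"
  define v where "v = unit_ball_vol DIM('a) * r ^ DIM('a)"
  have v: "0 < v" using r by (simp add: v_def)
  have "ennreal (r powr \<gamma>) * (I / ennreal v) \<le> frac_maximal \<gamma> f x"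
    unfolding frac_maximal_def I_def v_def using r
    by (intro SUP_upper2[of r]) (auto simp: emeasure_ball)
  then have "ennreal (v * r powr (- \<gamma>)) * (ennreal (r powr \<gamma>) * (I / ennreal v))
      \<le> ennreal (v * r powr (- \<gamma>)) * frac_maximal \<gamma> f x"
    by (rule mult_left_mono) simp
  also have "ennreal (v * r powr (- \<gamma>)) * (ennreal (r powr \<gamma>) * (I / ennreal v)) = ennreal v * (I / ennreal v)"
    using v r by (simp add: mult.assoc[symmetric] ennreal_mult[symmetric] powr_minus field_simps)
  also have "\<dots> = I * ennreal v / ennreal v"
    by (simp add: ennreal_times_divide mult.commute)
  also have "\<dots> = I"
    using v by (simp add: mult_divide_eq_ennreal)
  finally show ?thesis by (simp add: I_def v_def)
qed

lemma ball_mass_le_frac_maximal: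
  fixes f :: "'a::euclidean_space \<Rightarrow> real"
  assumes t: "0 < t"
  shows "ball_mass f x t
    \<le> ennreal (unit_ball_vol DIM('a) powr (\<gamma> / DIM('a)) * t powr (1 - \<gamma> / DIM('a))) * frac_maximal \<gamma> f x"
proof -
  let ?r = "vol_radius DIM('a) t"
  have "t * ?r powr (- \<gamma>) = unit_ball_vol DIM('a) powr (\<gamma> / DIM('a)) * t powr (1 - \<gamma> / DIM('a))"
  proof -
    have "t powr (1 - \<gamma> / DIM('a)) = t * t powr (- \<gamma> / DIM('a))"
      using t powr_add[of t 1 "- \<gamma> / DIM('a)"] by simp
    then show ?thesis using t by (simp add: vol_radius_powr)
  qed
  then show ?thesis
    using nn_integral_ball_le_frac_maximal[OF vol_radius_pos[OF t, of "DIM('a)"], where x=x and f=f and \<gamma>=\<gamma>]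
    unfolding ball_mass_def using t by (simp add: unit_ball_vol_mult_vol_radius)
qed

lemma ball_mass_le_rearr2:
  fixes f :: "'a::euclidean_space \<Rightarrow> real"
  assumes f: "f \<in> borel_measurable lborel" and t: "0 < t"
  shows "ball_mass f x t \<le> ennreal t * rearr2 f t"
proof -
  have "ball_mass f x t \<le> (\<integral>\<^sup>+s\<in>{0<..<t}. rearr f s \<partial>lborel)"
    unfolding ball_mass_def using t
    by (intro nn_integral_le_rearr[OF f]) (auto simp: emeasure_ball_vol_radius)
  also have "\<dots> = ennreal t * rearr2 f t"
    using t by (simp add: rearr2_def mult.assoc[symmetric] ennreal_mult[symmetric])
  finally show ?thesis .
qed

section \<open>Layer decomposition of the Riesz potential\<close>

definition riesz_layer_const :: "nat \<Rightarrow> real \<Rightarrow> real" where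
  "riesz_layer_const n \<alpha> = unit_ball_vol n powr (1 - \<alpha> / n) * (1 - \<alpha> / n)"

lemma riesz_layer_const_pos: "0 < \<alpha> \<Longrightarrow> \<alpha> < real n \<Longrightarrow> 0 < riesz_layer_const n \<alpha>"
  by (simp add: riesz_layer_const_def)

lemma powr_eq_nn_integral_riesz_layers:
  assumes \<alpha>: "0 < \<alpha>" "\<alpha> < real n" and d: "0 < d"
  shows "ennreal (d powr (\<alpha> - n)) =
    (\<integral>\<^sup>+t\<in>{unit_ball_vol n * d powr n<..}. ennreal (riesz_layer_const n \<alpha> * t powr (\<alpha> / n - 2)) \<partial>lborel)"
proof -
  define a where "a = \<alpha> / n"
  define \<omega> where "\<omega> = unit_ball_vol n"
  have a: "0 < a" "a < 1" and \<omega>: "0 < \<omega>" and n: "0 < real n"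
    using \<alpha> by (auto simp: a_def \<omega>_def field_simps)
  have "(\<integral>\<^sup>+t\<in>{\<omega> * d powr n<..}. ennreal (riesz_layer_const n \<alpha> * t powr (a - 2)) \<partial>lborel)
      = ennreal (riesz_layer_const n \<alpha>) * (\<integral>\<^sup>+t\<in>{\<omega> * d powr n<..}. ennreal (t powr (a - 2)) \<partial>lborel)"
    using riesz_layer_const_pos[OF \<alpha>]
    by (subst nn_integral_cmult[symmetric]) (auto simp: ennreal_mult mult.assoc)
  also have "\<dots> = ennreal (riesz_layer_const n \<alpha> * ((\<omega> * d powr n) powr (a - 1) / (1 - a)))"
    using a \<omega> d riesz_layer_const_pos[OF \<alpha>]
    by (simp add: nn_integral_powr_greaterThan ennreal_mult[symmetric] field_simps)
  also have "riesz_layer_const n \<alpha> * ((\<omega> * d powr n) powr (a - 1) / (1 - a)) = d powr (\<alpha> - n)"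
  proof -
    have "riesz_layer_const n \<alpha> * ((\<omega> * d powr n) powr (a - 1) / (1 - a))
        = \<omega> powr (1 - a) * (\<omega> * d powr n) powr (a - 1)"
      using a by (simp add: riesz_layer_const_def a_def[symmetric] \<omega>_def[symmetric])
    also have "\<dots> = (\<omega> powr (1 - a) * \<omega> powr (a - 1)) * d powr (\<alpha> - n)"
      using \<omega> d n by (simp add: powr_mult powr_powr a_def algebra_simps)
    also have "\<omega> powr (1 - a) * \<omega> powr (a - 1) = 1"
      using \<omega> by (simp add: powr_add[symmetric])
    finally show ?thesis by simp
  qed
  finally show ?thesis by (simp add: a_def \<omega>_def)
qed

lemma nn_integral_riesz_kernel_le_layers:
  fixes f :: "'a::euclidean_space \<Rightarrow> real" and \<alpha> :: real
  assumes f[measurable]: "f \<in> borel_measurable lborel" and \<alpha>: "0 < \<alpha>" "\<alpha> < DIM('a)"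
  shows "(\<integral>\<^sup>+y. ennreal (\<bar>f y\<bar> / norm (x - y) powr (DIM('a) - \<alpha>)) \<partial>lborel)
    \<le> (\<integral>\<^sup>+t\<in>{0<..}. ennreal (riesz_layer_const DIM('a) \<alpha> * t powr (\<alpha> / DIM('a) - 2)) * ball_mass f x t \<partial>lborel)"
proof -
  let ?w = "\<lambda>t. ennreal (riesz_layer_const DIM('a) \<alpha> * t powr (\<alpha> / DIM('a) - 2)) * indicator {0<..} t"
  let ?h = "\<lambda>t y. ?w t * (ennreal \<bar>f y\<bar> * indicator (ball x (vol_radius DIM('a) t)) y)"
  have "ennreal (\<bar>f y\<bar> / norm (x - y) powr (DIM('a) - \<alpha>)) \<le> (\<integral>\<^sup>+t. ?h t y \<partial>lborel)" for y
  proof (cases "y = x")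
    case False
    define d where "d = norm (x - y)"
    have d: "0 < d" using False by (simp add: d_def)
    have m: "0 < unit_ball_vol DIM('a) * d powr DIM('a)" using d by simp
    have ball_iff: "indicator (ball x (vol_radius DIM('a) t)) y * indicator {0<..} t
        = (indicator {unit_ball_vol DIM('a) * d powr DIM('a)<..} t :: ennreal)" for t
      using d less_vol_radius_iff[of t "DIM('a)" d]
      by (cases "0 < t") (auto simp: indicator_def dist_norm d_def[symmetric] dest: order.strict_trans[OF m])
    have "ennreal (\<bar>f y\<bar> / norm (x - y) powr (DIM('a) - \<alpha>)) = ennreal \<bar>f y\<bar> * ennreal (d powr (\<alpha> - DIM('a)))"
      using powr_minus[of d "DIM('a) - \<alpha>"] by (simp add: d_def ennreal_mult[symmetric] divide_inverse)
    also have "\<dots> = (\<integral>\<^sup>+t. ennreal \<bar>f y\<bar> * (ennreal (riesz_layer_const DIM('a) \<alpha> * t powr (\<alpha> / DIM('a) - 2))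
        * indicator {unit_ball_vol DIM('a) * d powr DIM('a)<..} t) \<partial>lborel)"
      using d \<alpha> by (simp add: powr_eq_nn_integral_riesz_layers nn_integral_cmult)
    also have "\<dots> = (\<integral>\<^sup>+t. ?h t y \<partial>lborel)"
      by (simp add: ball_iff[symmetric] ac_simps)
    finally show ?thesis by simp
  qed simp \<comment> \<open>at \<open>y = x\<close> the left-hand side is \<open>0\<close>, as \<open>0 powr _ = 0\<close> and \<open>_ / 0 = 0\<close>\<close>
  then have "(\<integral>\<^sup>+y. ennreal (\<bar>f y\<bar> / norm (x - y) powr (DIM('a) - \<alpha>)) \<partial>lborel)
      \<le> (\<integral>\<^sup>+y. \<integral>\<^sup>+t. ?h t y \<partial>lborel \<partial>lborel)"
    by (intro nn_integral_mono)
  also have "\<dots> = (\<integral>\<^sup>+t. \<integral>\<^sup>+y. ?h t y \<partial>lborel \<partial>lborel)"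
    by (rule lborel_pair.Fubini') (unfold indicator_def mem_ball vol_radius_def split_beta', measurable)
  also have "\<dots> = (\<integral>\<^sup>+t. ?w t * ball_mass f x t \<partial>lborel)"
    unfolding ball_mass_def by (intro nn_integral_cong nn_integral_cmult) (measurable, simp add: pred_def)
  finally show ?thesis by (simp add: ac_simps)
qed

lemma nn_integral_ball_mass_lower:
  fixes f :: "'a::euclidean_space \<Rightarrow> real" and c \<alpha> \<epsilon> T :: real
  assumes c: "0 \<le> c" and \<epsilon>: "0 < \<epsilon>" and T: "0 < T"
  shows "(\<integral>\<^sup>+t\<in>{0<..T}. ennreal (c * t powr (\<alpha> / DIM('a) - 2)) * ball_mass f x t \<partial>lborel)
    \<le> ennreal (c * unit_ball_vol DIM('a) powr ((\<alpha> - \<epsilon>) / DIM('a)) * (DIM('a) / \<epsilon>) * T powr (\<epsilon> / DIM('a)))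
      * frac_maximal (\<alpha> - \<epsilon>) f x"
proof -
  define N where "N = real DIM('a)"
  define K where "K = c * unit_ball_vol N powr ((\<alpha> - \<epsilon>) / N)"
  have N: "0 < N" and K: "0 \<le> K" using c by (simp_all add: N_def K_def)
  have "ennreal (c * t powr (\<alpha> / N - 2)) * ball_mass f x t
      \<le> ennreal (c * t powr (\<alpha> / N - 2)) * (ennreal (unit_ball_vol N powr ((\<alpha> - \<epsilon>) / N)
          * t powr (1 - (\<alpha> - \<epsilon>) / N)) * frac_maximal (\<alpha> - \<epsilon>) f x)" if t: "0 < t" for t
    using ball_mass_le_frac_maximal[OF t] by (intro mult_left_mono) (auto simp: N_def)
  also have "\<dots> t = ennreal (K * t powr (\<epsilon> / N - 1)) * frac_maximal (\<alpha> - \<epsilon>) f x" if t: "0 < t" for t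
  proof -
    have "t powr (\<alpha> / N - 2) * t powr (1 - (\<alpha> - \<epsilon>) / N) = t powr (\<alpha> / N - 2 + (1 - (\<alpha> - \<epsilon>) / N))"
      by (rule powr_add[symmetric])
    also have "\<alpha> / N - 2 + (1 - (\<alpha> - \<epsilon>) / N) = \<epsilon> / N - 1"
      using N by (simp add: field_simps)
    finally have "t powr (\<alpha> / N - 2) * t powr (1 - (\<alpha> - \<epsilon>) / N) = t powr (\<epsilon> / N - 1)" .
    then have "c * t powr (\<alpha> / N - 2) * (unit_ball_vol N powr ((\<alpha> - \<epsilon>) / N) * t powr (1 - (\<alpha> - \<epsilon>) / N))
        = K * t powr (\<epsilon> / N - 1)"
      by (simp add: K_def ac_simps)
    then show ?thesis
      using c by (simp add: ennreal_mult_mult)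
  qed
  finally have "(\<integral>\<^sup>+t\<in>{0<..T}. ennreal (c * t powr (\<alpha> / N - 2)) * ball_mass f x t \<partial>lborel)
      \<le> (\<integral>\<^sup>+t\<in>{0<..T}. (ennreal K * frac_maximal (\<alpha> - \<epsilon>) f x) * ennreal (t powr (\<epsilon> / N - 1)) \<partial>lborel)"
    using K by (intro nn_integral_mono) (auto split: split_indicator simp: ennreal_mult ac_simps)
  also have "\<dots> = ennreal K * frac_maximal (\<alpha> - \<epsilon>) f x * ennreal (T powr (\<epsilon> / N) / (\<epsilon> / N))"
    using \<epsilon> N T by (simp add: nn_integral_cmult nn_integral_powr_Ioc mult.assoc)
  also have "T powr (\<epsilon> / N) / (\<epsilon> / N) = N / \<epsilon> * T powr (\<epsilon> / N)"
    by simp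
  also have "ennreal K * frac_maximal (\<alpha> - \<epsilon>) f x * ennreal (N / \<epsilon> * T powr (\<epsilon> / N))
      = ennreal (K * (N / \<epsilon> * T powr (\<epsilon> / N))) * frac_maximal (\<alpha> - \<epsilon>) f x"
    using K \<epsilon> N by (subst ennreal_mult) (auto simp: mult_ac)
  finally show ?thesis by (simp add: N_def K_def mult.assoc)
qed

lemma powr_tail_weight_le:
  fixes a c p t T :: real
  assumes c: "0 \<le> c" and a: "a < 1 / p" and T: "0 < T" "T < t"
  shows "c * t powr (a - 2) * t \<le> c * T powr (a - 1 / p) * (t powr (1 / p) * (1 / t))"
proof -
  have t: "0 < t" using T by simp
  have "t powr (a - 2) * t = t powr (a - 1)"
    using powr_add[of t "a - 2" 1] t by simp
  moreover have "t powr (a - 1 / p) * (t powr (1 / p) * (1 / t)) = t powr (a - 1)"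
    using powr_add[of t "a - 1 / p" "1 / p"] powr_add[of t a "- 1"] t
    by (simp add: powr_minus_divide mult.assoc[symmetric] divide_inverse)
  ultimately have "c * t powr (a - 2) * t = c * t powr (a - 1 / p) * (t powr (1 / p) * (1 / t))"
    by (metis mult.assoc)
  also have "\<dots> \<le> c * T powr (a - 1 / p) * (t powr (1 / p) * (1 / t))"
    using c a T t by (intro mult_right_mono mult_left_mono powr_mono2') auto
  finally show ?thesis .
qed

lemma nn_integral_ball_mass_upper:
  fixes f :: "'a::euclidean_space \<Rightarrow> real" and c \<alpha> p T :: real
  assumes f: "f \<in> borel_measurable lborel" and c: "0 \<le> c" and p: "0 < p" "\<alpha> < DIM('a) / p"
    and T: "0 < T"
  shows "(\<integral>\<^sup>+t\<in>{T<..}. ennreal (c * t powr (\<alpha> / DIM('a) - 2)) * ball_mass f x t \<partial>lborel)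
    \<le> ennreal (c * T powr (\<alpha> / DIM('a) - 1 / p)) * lorentz_norm p 1 f"
proof -
  define a where "a = \<alpha> / DIM('a)"
  define \<kappa> where "\<kappa> = c * T powr (a - 1 / p)"
  have a: "a < 1 / p" using p by (simp add: a_def field_simps)
  have \<kappa>: "0 \<le> \<kappa>" using c by (simp add: \<kappa>_def)
  have "ennreal (c * t powr (a - 2)) * ball_mass f x t
      \<le> ennreal \<kappa> * (ennreal (t powr (1 / p)) * rearr2 f t * ennreal (1 / t))" if t: "T < t" for t
  proof -
    have t0: "0 < t" using t T by simp
    have "ennreal (c * t powr (a - 2)) * ball_mass f x t \<le> ennreal (c * t powr (a - 2)) * (ennreal t * rearr2 f t)"
      using ball_mass_le_rearr2[OF f t0] by (rule mult_left_mono) simp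
    also have "\<dots> = ennreal (c * t powr (a - 2) * t) * rearr2 f t"
      using c t0 by (simp add: ennreal_mult_mult)
    also have "\<dots> \<le> ennreal (\<kappa> * (t powr (1 / p) * (1 / t))) * rearr2 f t"
      unfolding \<kappa>_def using powr_tail_weight_le[OF c a T t]
      by (intro mult_right_mono ennreal_leI) simp_all
    also have "\<dots> = ennreal \<kappa> * (ennreal (t powr (1 / p)) * rearr2 f t * ennreal (1 / t))"
      using \<kappa> t0
      by (simp only: ennreal_mult zero_le_divide_1_iff powr_ge_zero mult_nonneg_nonneg less_imp_le mult_ac)
    finally show ?thesis .
  qed
  then have "(\<integral>\<^sup>+t\<in>{T<..}. ennreal (c * t powr (a - 2)) * ball_mass f x t \<partial>lborel)
      \<le> (\<integral>\<^sup>+t\<in>{0<..}. ennreal \<kappa> * (ennreal (t powr (1 / p)) * rearr2 f t * ennreal (1 / t)) \<partial>lborel)"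
    using T by (intro nn_integral_mono) (auto simp: indicator_def)
  also have "\<dots> = ennreal \<kappa> * lorentz_norm p 1 f"
    by (simp add: lorentz_norm_1 nn_integral_cmult[symmetric] mult.assoc)
  finally show ?thesis by (simp add: \<kappa>_def a_def)
qed

lemma nn_integral_riesz_layers_finite:
  fixes f :: "'a::euclidean_space \<Rightarrow> real" and \<alpha> \<epsilon> :: real
  assumes f[measurable]: "f \<in> borel_measurable lborel" and \<alpha>: "0 < \<alpha>" "\<alpha> < DIM('a)" and \<epsilon>: "0 < \<epsilon>"
    and S: "bounded S" "\<And>y. y \<notin> S \<Longrightarrow> f y = 0"
    and M: "frac_maximal (\<alpha> - \<epsilon>) f x < \<infinity>"
  shows "(\<integral>\<^sup>+t\<in>{0<..}. ennreal (riesz_layer_const DIM('a) \<alpha> * t powr (\<alpha> / DIM('a) - 2)) * ball_mass f x t \<partial>lborel) < \<infinity>"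
proof -
  define c where "c = riesz_layer_const DIM('a) \<alpha>"
  define a where "a = \<alpha> / DIM('a)"
  define I where "I = (\<integral>\<^sup>+y. ennreal \<bar>f y\<bar> \<partial>lborel)"
  have c: "0 < c" using \<alpha> by (simp add: c_def riesz_layer_const_pos)
  have a: "a < 1" using \<alpha> by (simp add: a_def)
  obtain R where R: "0 < R" "S \<subseteq> ball x R" using bounded_subset_ballD[OF S(1)] by blast
  have "I = (\<integral>\<^sup>+y\<in>ball x R. ennreal \<bar>f y\<bar> \<partial>lborel)"
    unfolding I_def using R S(2) by (intro nn_integral_cong) (auto split: split_indicator simp: subset_iff)
  also have "\<dots> < \<infinity>"
    using nn_integral_ball_le_frac_maximal[OF R(1), where x=x and f=f and \<gamma>="\<alpha> - \<epsilon>"] M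
    by (simp add: ennreal_mult_less_top order.strict_trans1)
  finally have I: "I < \<infinity>" .
  have "ennreal (c * t powr (a - 2)) * ball_mass f x t \<le> ennreal (c * t powr (a - 2)) * I" for t
    unfolding ball_mass_def I_def by (intro mult_left_mono nn_integral_mono) (auto split: split_indicator)
  also have "ennreal (c * t powr (a - 2)) * I = (ennreal c * I) * ennreal (t powr (a - 2))" for t
    using c by (simp add: ennreal_mult ac_simps)
  finally have "(\<integral>\<^sup>+t\<in>{1<..}. ennreal (c * t powr (a - 2)) * ball_mass f x t \<partial>lborel)
      \<le> (\<integral>\<^sup>+t\<in>{1<..}. (ennreal c * I) * ennreal (t powr (a - 2)) \<partial>lborel)"
    by (intro nn_integral_mono) (simp add: mult_right_mono)
  also have "\<dots> = ennreal c * I * (\<integral>\<^sup>+t\<in>{1<..}. ennreal (t powr (a - 2)) \<partial>lborel)"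
    by (simp add: nn_integral_cmult mult.assoc)
  also have "\<dots> < \<infinity>"
    using a I by (simp add: nn_integral_powr_greaterThan ennreal_mult_less_top)
  finally have upper: "(\<integral>\<^sup>+t\<in>{1<..}. ennreal (c * t powr (a - 2)) * ball_mass f x t \<partial>lborel) < \<infinity>" .
  have lower: "(\<integral>\<^sup>+t\<in>{0<..1}. ennreal (c * t powr (a - 2)) * ball_mass f x t \<partial>lborel) < \<infinity>"
    using nn_integral_ball_mass_lower[where c=c and T=1 and \<alpha>=\<alpha> and f=f and x=x, OF _ \<epsilon>] c M
    by (simp add: a_def ennreal_mult_less_top order.strict_trans1)
  show ?thesis
    using lower upper
    by (simp add: set_nn_integral_greaterThan_split[of _ 1] c_def a_def)
qed

lemma riesz_const_pos: "0 < \<alpha> \<Longrightarrow> \<alpha> < N \<Longrightarrow> 0 < riesz_const N \<alpha>"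
  by (simp add: riesz_const_def)

lemma abs_riesz_potential_le:
  fixes f :: "'a::euclidean_space \<Rightarrow> real" and \<alpha> :: real
  assumes "0 < \<alpha>" "\<alpha> < DIM('a)"
  shows "ennreal \<bar>riesz_potential \<alpha> f x\<bar>
    \<le> ennreal (1 / riesz_const DIM('a) \<alpha>) * (\<integral>\<^sup>+y. ennreal (\<bar>f y\<bar> / norm (x - y) powr (DIM('a) - \<alpha>)) \<partial>lborel)"
proof -
  let ?k = "\<lambda>y. f y / norm (x - y) powr (DIM('a) - \<alpha>)"
  have "ennreal \<bar>integral\<^sup>L lborel ?k\<bar> \<le> (\<integral>\<^sup>+y. ennreal (\<bar>f y\<bar> / norm (x - y) powr (DIM('a) - \<alpha>)) \<partial>lborel)"
  proof (cases "integrable lborel ?k")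
    case True
    then show ?thesis
      using integral_norm_bound_ennreal[OF True] by simp
  qed (simp add: not_integrable_integral_eq)
  moreover have "ennreal \<bar>riesz_potential \<alpha> f x\<bar> = ennreal (1 / riesz_const DIM('a) \<alpha>) * ennreal \<bar>integral\<^sup>L lborel ?k\<bar>"
    using riesz_const_pos[OF assms]
    by (subst ennreal_mult[symmetric]) (auto simp: riesz_potential_def abs_mult)
  ultimately show ?thesis
    by (simp add: mult_left_mono)
qed

lemma integrable_riesz_kernel:
  fixes f :: "'a::euclidean_space \<Rightarrow> real" and \<alpha> \<epsilon> :: real
  assumes f[measurable]: "f \<in> borel_measurable lborel" and \<alpha>: "0 < \<alpha>" "\<alpha> < DIM('a)" and \<epsilon>: "0 < \<epsilon>"
    and S: "bounded S" "\<And>y. y \<notin> S \<Longrightarrow> f y = 0"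
    and M: "frac_maximal (\<alpha> - \<epsilon>) f x < \<infinity>"
  shows "integrable lborel (\<lambda>y. f y / norm (x - y) powr (DIM('a) - \<alpha>))"
proof (rule integrableI_bounded)
  have "(\<integral>\<^sup>+y. ennreal (norm (f y / norm (x - y) powr (DIM('a) - \<alpha>))) \<partial>lborel)
      = (\<integral>\<^sup>+y. ennreal (\<bar>f y\<bar> / norm (x - y) powr (DIM('a) - \<alpha>)) \<partial>lborel)"
    by simp
  also have "\<dots> < \<infinity>"
    using nn_integral_riesz_kernel_le_layers[OF f \<alpha>, of x] nn_integral_riesz_layers_finite[OF f \<alpha> \<epsilon> S M]
    by (rule order.strict_trans1)
  finally show "(\<integral>\<^sup>+y. ennreal (norm (f y / norm (x - y) powr (DIM('a) - \<alpha>))) \<partial>lborel) < \<infinity>" .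
qed measurable

definition riesz_bound_const :: "nat \<Rightarrow> real \<Rightarrow> real \<Rightarrow> real" where
  "riesz_bound_const n \<alpha> \<epsilon> =
     (riesz_layer_const n \<alpha> * unit_ball_vol n powr ((\<alpha> - \<epsilon>) / n) * (n / \<epsilon>) + riesz_layer_const n \<alpha>)
       / riesz_const n \<alpha>"

lemma riesz_bound_const_pos:
  "0 < \<alpha> \<Longrightarrow> \<alpha> < real n \<Longrightarrow> 0 < \<epsilon> \<Longrightarrow> 0 < riesz_bound_const n \<alpha> \<epsilon>"
  unfolding riesz_bound_const_def
  by (intro divide_pos_pos add_nonneg_pos mult_nonneg_nonneg riesz_layer_const_pos riesz_const_pos)
    (auto intro: less_imp_le riesz_layer_const_pos)

lemma nn_integral_riesz_layers_le:
  fixes f :: "'a::euclidean_space \<Rightarrow> real" and \<alpha> \<epsilon> p \<delta> :: real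
  assumes f[measurable]: "f \<in> borel_measurable lborel" and \<alpha>: "0 < \<alpha>" "\<alpha> < DIM('a)"
    and \<epsilon>: "0 < \<epsilon>" and p: "0 < p" and \<delta>: "\<delta> = DIM('a) / p - \<alpha>" "0 < \<delta>"
  shows "(\<integral>\<^sup>+t\<in>{0<..}. ennreal (riesz_layer_const DIM('a) \<alpha> * t powr (\<alpha> / DIM('a) - 2)) * ball_mass f x t \<partial>lborel)
    \<le> ennreal (riesz_const DIM('a) \<alpha> * riesz_bound_const DIM('a) \<alpha> \<epsilon>)
        * epowr (frac_maximal (\<alpha> - \<epsilon>) f x) (\<delta> / (\<delta> + \<epsilon>)) * epowr (lorentz_norm p 1 f) (\<epsilon> / (\<epsilon> + \<delta>))"
proof -
  define N where "N = real DIM('a)"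
  define c where "c = riesz_layer_const DIM('a) \<alpha>"
  define K1 where "K1 = c * unit_ball_vol N powr ((\<alpha> - \<epsilon>) / N) * (N / \<epsilon>)"
  have N: "0 < N" and c: "0 < c" and K1: "0 < K1"
    using \<alpha> \<epsilon> by (simp_all add: N_def c_def K1_def riesz_layer_const_pos)
  have interpolated: "(\<integral>\<^sup>+t\<in>{0<..}. ennreal (c * t powr (\<alpha> / N - 2)) * ball_mass f x t \<partial>lborel)
      \<le> ennreal (K1 + c) * epowr (frac_maximal (\<alpha> - \<epsilon>) f x) ((\<delta> / N) / (\<epsilon> / N + \<delta> / N))
          * epowr (lorentz_norm p 1 f) ((\<epsilon> / N) / (\<epsilon> / N + \<delta> / N))"
  proof (rule nn_integral_interpolation_bound)
    show "(\<integral>\<^sup>+t\<in>{0<..T}. ennreal (c * t powr (\<alpha> / N - 2)) * ball_mass f x t \<partial>lborel)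
        \<le> ennreal (K1 * T powr (\<epsilon> / N)) * frac_maximal (\<alpha> - \<epsilon>) f x" if "0 < T" for T
      using nn_integral_ball_mass_lower[OF less_imp_le[OF c] \<epsilon> that]
      by (simp add: N_def K1_def mult.assoc)
    have "\<alpha> / N - 1 / p = - (\<delta> / N)" unfolding \<delta>(1) N_def using p by (simp add: field_simps)
    moreover have "\<alpha> < N / p" using \<delta> by (simp add: N_def)
    ultimately show "(\<integral>\<^sup>+t\<in>{T<..}. ennreal (c * t powr (\<alpha> / N - 2)) * ball_mass f x t \<partial>lborel)
        \<le> ennreal (c * T powr (- (\<delta> / N))) * lorentz_norm p 1 f" if "0 < T" for T
      using nn_integral_ball_mass_upper[OF f less_imp_le[OF c] p _ that, where \<alpha>=\<alpha> and x=x]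
      by (simp add: N_def)
  qed (use K1 c \<epsilon> \<delta> N in auto)
  have exponents: "(\<delta> / N) / (\<epsilon> / N + \<delta> / N) = \<delta> / (\<delta> + \<epsilon>)" "(\<epsilon> / N) / (\<epsilon> / N + \<delta> / N) = \<epsilon> / (\<epsilon> + \<delta>)"
    using N by (simp_all add: field_simps)
  have K1_c: "K1 + c = riesz_const N \<alpha> * riesz_bound_const DIM('a) \<alpha> \<epsilon>"
    using riesz_const_pos[of \<alpha> N] \<alpha> by (simp add: riesz_bound_const_def K1_def c_def N_def)
  show ?thesis
    using interpolated unfolding exponents K1_c unfolding N_def c_def .
qed

lemma riesz_potential_interpolation:
  fixes f :: "'a::euclidean_space \<Rightarrow> real" and \<alpha> \<epsilon> p \<delta> :: real
  assumes f: "f \<in> borel_measurable lborel" and \<alpha>: "0 < \<alpha>" "\<alpha> < DIM('a)"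
    and \<epsilon>: "0 < \<epsilon>" and p: "0 < p" and \<delta>: "\<delta> = DIM('a) / p - \<alpha>" "0 < \<delta>"
  shows "ennreal \<bar>riesz_potential \<alpha> f x\<bar>
    \<le> ennreal (riesz_bound_const DIM('a) \<alpha> \<epsilon>) * epowr (frac_maximal (\<alpha> - \<epsilon>) f x) (\<delta> / (\<delta> + \<epsilon>))
        * epowr (lorentz_norm p 1 f) (\<epsilon> / (\<epsilon> + \<delta>))"
proof -
  let ?g = "riesz_const DIM('a) \<alpha>" and ?C = "riesz_bound_const DIM('a) \<alpha> \<epsilon>"
  let ?P = "epowr (frac_maximal (\<alpha> - \<epsilon>) f x) (\<delta> / (\<delta> + \<epsilon>)) * epowr (lorentz_norm p 1 f) (\<epsilon> / (\<epsilon> + \<delta>))"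
  have g: "0 < ?g" and C: "0 < ?C"
    using \<alpha> \<epsilon> by (simp_all add: riesz_const_pos riesz_bound_const_pos)
  have "ennreal \<bar>riesz_potential \<alpha> f x\<bar>
      \<le> ennreal (1 / ?g) * (\<integral>\<^sup>+y. ennreal (\<bar>f y\<bar> / norm (x - y) powr (DIM('a) - \<alpha>)) \<partial>lborel)"
    by (rule abs_riesz_potential_le[OF \<alpha>])
  also have "\<dots> \<le> ennreal (1 / ?g)
      * (\<integral>\<^sup>+t\<in>{0<..}. ennreal (riesz_layer_const DIM('a) \<alpha> * t powr (\<alpha> / DIM('a) - 2)) * ball_mass f x t \<partial>lborel)"
    by (rule mult_left_mono[OF nn_integral_riesz_kernel_le_layers[OF f \<alpha>]]) simp
  also have "\<dots> \<le> ennreal (1 / ?g) * (ennreal (?g * ?C) * ?P)"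
    using nn_integral_riesz_layers_le[OF f \<alpha> \<epsilon> p \<delta>, of x]
    by (intro mult_left_mono) (simp_all add: mult.assoc)
  also have "ennreal (1 / ?g) * (ennreal (?g * ?C) * ?P) = ennreal ?C * ?P"
    using g C by (simp add: mult.assoc[symmetric] ennreal_mult[symmetric])
  finally show ?thesis by (simp add: mult.assoc)
qed

theorem lemma3p4:
  fixes \<alpha> \<epsilon> :: real
  assumes "0 < \<alpha>" "\<alpha> < real DIM('a::euclidean_space)"
    and "0 < \<epsilon>" "\<epsilon> < \<alpha>"
  shows "\<exists>C>0. \<forall>(\<Omega>::'a set) (q::ennreal) (f::'a \<Rightarrow> real) (p::real) (x::'a).
     open \<Omega> \<longrightarrow> bounded \<Omega> \<longrightarrow> 1 < q \<longrightarrow>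
     f \<in> borel_measurable lborel \<longrightarrow> (\<forall>y. y \<notin> \<Omega> \<longrightarrow> f y = 0) \<longrightarrow>
     lorentz_norm (real DIM('a) / \<alpha>) q f < \<infinity> \<longrightarrow>
     (real DIM('a) / \<alpha> + 1) / 2 \<le> p \<longrightarrow> p < real DIM('a) / \<alpha> \<longrightarrow>
     (let \<delta> = real DIM('a) / p - \<alpha> in
       (frac_maximal (\<alpha> - \<epsilon>) f x < \<infinity> \<longrightarrow>
          integrable lborel (\<lambda>y. f y / norm (x - y) powr (real DIM('a) - \<alpha>))) \<and>
       ennreal \<bar>riesz_potential \<alpha> f x\<bar> \<le>
         ennreal C * epowr (frac_maximal (\<alpha> - \<epsilon>) f x) (\<delta> / (\<delta> + \<epsilon>))
                   * epowr (lorentz_norm p 1 f) (\<epsilon> / (\<epsilon> + \<delta>)))"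
proof (intro exI[of _ "riesz_bound_const DIM('a) \<alpha> \<epsilon>"] conjI allI impI)
  show "0 < riesz_bound_const DIM('a) \<alpha> \<epsilon>"
    using assms by (simp add: riesz_bound_const_pos)
next
  fix \<Omega> :: "'a set" and q :: ennreal and f :: "'a \<Rightarrow> real" and p :: real and x :: 'a
  assume "open \<Omega>" and \<Omega>: "bounded \<Omega>" and "1 < q" and f: "f \<in> borel_measurable lborel"
    and f0: "\<forall>y. y \<notin> \<Omega> \<longrightarrow> f y = 0" and "lorentz_norm (real DIM('a) / \<alpha>) q f < \<infinity>"
    and p: "(real DIM('a) / \<alpha> + 1) / 2 \<le> p" "p < real DIM('a) / \<alpha>"
  have "0 < p" using p(1) assms(1,2) by (smt (verit) divide_pos_pos)
  moreover have "0 < real DIM('a) / p - \<alpha>" using p(2) \<open>0 < p\<close> assms(1) by (simp add: field_simps)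
  ultimately show "let \<delta> = real DIM('a) / p - \<alpha> in
       (frac_maximal (\<alpha> - \<epsilon>) f x < \<infinity> \<longrightarrow>
          integrable lborel (\<lambda>y. f y / norm (x - y) powr (real DIM('a) - \<alpha>))) \<and>
       ennreal \<bar>riesz_potential \<alpha> f x\<bar> \<le>
         ennreal (riesz_bound_const DIM('a) \<alpha> \<epsilon>) * epowr (frac_maximal (\<alpha> - \<epsilon>) f x) (\<delta> / (\<delta> + \<epsilon>))
                   * epowr (lorentz_norm p 1 f) (\<epsilon> / (\<epsilon> + \<delta>))"
    using integrable_riesz_kernel[OF f assms(1,2,3) \<Omega>] f0
      riesz_potential_interpolation[OF f assms(1,2,3) _ refl, of p x]
    by (auto simp: Let_def)
qed

end
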